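(* For every $n\geq0$, $$\sum_{\sigma\in\mathfrak S_n}(xy)^{{\rm L}(\sigma)}\Bigl(\frac{x+y}{2}\Bigr)^{n-2{\rm L}(\sigma)}\beta^{{\rm RLmin}(\sigma)}=\sum_{\sigma\in\mathfrak S_{n+1}}x^{{\rm des}(\sigma)}y^{n-{\rm des}(\sigma)}\Bigl(\frac{\beta}{2}\Bigr)^{{\rm LRmin}(\sigma)+{\rm RLmin}(\sigma)-2}.$$
   Context: For $\sigma=\sigma_1\cdots\sigma_m\in\mathfrak S_m$: ${\rm des}(\sigma)$ is the number of $i\in[m-1]$ with $\sigma_i>\sigma_{i+1}$; ${\rm L}(\sigma)$ (left peaks) is the number of $i$ with $1\le i<m$ and $\sigma_{i-1}<\sigma_i>\sigma_{i+1}$, with the convention $\sigma_0=0$; ${\rm LRmin}(\sigma)$ is the number of $i$ with $\sigma_j>\sigma_i$ for all $j<i$; ${\rm RLmin}(\sigma)$ is the number of $i$ with $\sigma_j>\sigma_i$ for all $j>i$. $\mathfrak S_0$ consists of the empty permutation (contributing $1$). *)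

theory Defs
  imports "HOL-Combinatorics.Multiset_Permutations"
begin

text \<open>Permutations of [m] = {1..m} are represented as lists (one-line notation);
  list index k (0-based) corresponds to position k+1.\<close>

definition des :: "nat list \<Rightarrow> nat" where
  "des s = card {i. Suc i < length s \<and> s ! i > s ! Suc i}"

definition lpk :: "nat list \<Rightarrow> nat" where
  "lpk s = card {i. Suc i < length s \<and>
      (if i = 0 then 0 else s ! (i - 1)) < s ! i \<and> s ! i > s ! Suc i}"

definition lrmin :: "nat list \<Rightarrow> nat" where
  "lrmin s = card {i. i < length s \<and> (\<forall>j<i. s ! j > s ! i)}"

definition rlmin :: "nat list \<Rightarrow> nat" where
  "rlmin s = card {i. i < length s \<and> (\<forall>j. i < j \<and> j < length s \<longrightarrow> s ! j > s ! i)}"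

end

theory Submission
  imports Defs "HOL-Computational_Algebra.Polynomial"
begin

text \<open>Both sides are values at \<open>X = x\<close> of polynomials in \<open>X\<close> with coefficients depending on
  \<open>y\<close> and \<open>\<beta>\<close>. Every permutation of \<open>[m+1]\<close> arises exactly once by inserting \<open>m+1\<close> into a
  slot of a permutation of \<open>[m]\<close>, and inserting a maximum changes left peaks, descents and
  left-to-right/right-to-left minima in a way that only depends on the old values. Summing over
  the slots shows that both sides, as polynomials \<open>P\<^sub>n\<close>, satisfy
  \<open>P\<^sub>n\<^sub>+\<^sub>1 = (\<beta>(y + X)/2 + nX) P\<^sub>n + (y - X) X P\<^sub>n'\<close>, and both equal \<open>1\<close> for \<open>n = 0\<close>.\<close>

lemma card_less_Suc_eq:
  "card {i. i < Suc m \<and> P i} = (if P 0 then 1 else 0) + card {i. i < m \<and> P (Suc i)}"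
proof -
  have "{i. i < Suc m \<and> P i} = (if P 0 then {0} else {}) \<union> Suc ` {i. i < m \<and> P (Suc i)}"
    by (auto simp: less_Suc_eq_0_disj)
  moreover have "card (Suc ` {i. i < m \<and> P (Suc i)}) = card {i. i < m \<and> P (Suc i)}"
    by (rule card_image) simp
  ultimately show ?thesis by (auto simp: card_insert_if)
qed

lemma des_Nil [simp]: "des [] = 0"
  by (simp add: des_def)

lemma des_singleton [simp]: "des [a] = 0"
  by (simp add: des_def)

lemma des_Cons_Cons [simp]: "des (a # b # xs) = (if b < a then 1 else 0) + des (b # xs)"
  unfolding des_def by (simp add: card_less_Suc_eq del: nth_Cons_Suc)

lemma des_less_length: "xs \<noteq> [] \<Longrightarrow> des xs < length xs"
  by (induction xs rule: induct_list012) auto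

text \<open>Left peaks with the convention \<open>s\<^sub>0 = p\<close>, so that the statistic recurses along the list.\<close>

definition lpk_from :: "nat \<Rightarrow> nat list \<Rightarrow> nat" where
  "lpk_from p s = card {i. Suc i < length s \<and>
      (if i = 0 then p else s ! (i - 1)) < s ! i \<and> s ! i > s ! Suc i}"

lemma lpk_eq_lpk_from_0: "lpk s = lpk_from 0 s"
  by (simp add: lpk_def lpk_from_def)

lemma lpk_from_Nil [simp]: "lpk_from p [] = 0"
  by (simp add: lpk_from_def)

lemma lpk_from_singleton [simp]: "lpk_from p [a] = 0"
  by (simp add: lpk_from_def)

lemma lpk_from_Cons_Cons [simp]:
  "lpk_from p (a # b # xs) = (if p < a \<and> b < a then 1 else 0) + lpk_from a (b # xs)"
  unfolding lpk_from_def
  by (simp add: card_less_Suc_eq del: nth_Cons_Suc) (simp add: nth_Cons' cong: conj_cong)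

lemma lpk_from_Cons_descent: "b < a \<Longrightarrow> lpk_from a (b # xs) = lpk_from b xs"
  by (cases xs) auto

lemma lpk_from_le_length: "2 * lpk_from p xs \<le> length xs"
proof (induction xs arbitrary: p rule: induct_list012)
  case (3 a b r)
  show ?case
  proof (cases "p < a \<and> b < a")
    case True
    then show ?thesis using "3.IH"(1)[of b] by (simp add: lpk_from_Cons_descent)
  next
    case False
    then show ?thesis using "3.IH"(2)[of a] by auto
  qed
qed simp_all

lemma rlmin_Nil [simp]: "rlmin [] = 0"
  by (simp add: rlmin_def)

lemma rlmin_Cons [simp]: "rlmin (a # xs) = (if \<forall>z\<in>set xs. a < z then 1 else 0) + rlmin xs"
proof -
  have "(\<forall>j. 0 < j \<and> j < Suc (length xs) \<longrightarrow> a < (a # xs) ! j) \<longleftrightarrow> (\<forall>z\<in>set xs. a < z)"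
    by (auto simp: all_set_conv_all_nth gr0_conv_Suc)
  moreover have "(\<forall>j. Suc i < j \<and> j < Suc (length xs) \<longrightarrow> xs ! i < (a # xs) ! j)
      \<longleftrightarrow> (\<forall>j. i < j \<and> j < length xs \<longrightarrow> xs ! i < xs ! j)" for i
    by (auto simp: gr0_conv_Suc) (metis Suc_lessE Suc_less_eq nth_Cons_Suc)
  ultimately show ?thesis
    unfolding rlmin_def by (simp add: card_less_Suc_eq del: nth_Cons_Suc)
qed

lemma rlmin_pos: "xs \<noteq> [] \<Longrightarrow> 0 < rlmin xs"
  by (induction xs) force+

lemma lrmin_eq_rlmin_rev: "lrmin s = rlmin (rev s)"
proof -
  let ?n = "length s" and ?r = "\<lambda>i. length s - Suc i"
  let ?A = "{i. i < ?n \<and> (\<forall>j<i. s ! j > s ! i)}"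
  let ?B = "{i. i < ?n \<and> (\<forall>j. i < j \<and> j < ?n \<longrightarrow> rev s ! j > rev s ! i)}"
  have "bij_betw ?r ?A ?B"
  proof (rule bij_betw_byWitness[where f' = ?r])
    show "?r ` ?A \<subseteq> ?B"
    proof (rule image_subsetI, safe)
      fix i j assume "i < ?n" "\<forall>j<i. s ! j > s ! i" "?r i < j" "j < ?n"
      moreover from this have "?r j < i" by linarith
      ultimately show "rev s ! j > rev s ! ?r i" by (simp add: rev_nth)
    qed simp
    show "?r ` ?B \<subseteq> ?A"
    proof (rule image_subsetI, safe)
      fix i j assume i: "i < ?n" and B: "\<forall>j. i < j \<and> j < ?n \<longrightarrow> rev s ! j > rev s ! i"
        and j: "j < ?r i"
      have "rev s ! ?r j > rev s ! i" using B i j by (simp add: less_diff_conv)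
      then show "s ! j > s ! ?r i" using i j by (simp add: rev_nth)
    qed simp
  qed auto
  then show ?thesis
    unfolding lrmin_def rlmin_def by (simp add: bij_betw_same_card)
qed

lemma lrmin_pos: "xs \<noteq> [] \<Longrightarrow> 0 < lrmin xs"
  by (simp add: lrmin_eq_rlmin_rev rlmin_pos)

definition insert_at :: "nat \<Rightarrow> 'a \<Rightarrow> 'a list \<Rightarrow> 'a list" where
  "insert_at j M xs = take j xs @ M # drop j xs"

lemma insert_at_0 [simp]: "insert_at 0 M xs = M # xs"
  by (simp add: insert_at_def)

lemma insert_at_Suc_Cons [simp]: "insert_at (Suc j) M (a # xs) = a # insert_at j M xs"
  by (simp add: insert_at_def)

lemma insert_at_beyond: "length xs \<le> j \<Longrightarrow> insert_at j M xs = xs @ [M]"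
  by (simp add: insert_at_def)

lemma set_insert_at [simp]: "set (insert_at j M xs) = insert M (set xs)"
  by (metis append_take_drop_id insert_at_def set_append set_simps(2) Un_insert_right)

lemma distinct_insert_at: "distinct xs \<Longrightarrow> M \<notin> set xs \<Longrightarrow> distinct (insert_at j M xs)"
  unfolding insert_at_def
  by (auto simp: set_take_disj_set_drop_if_distinct dest: in_set_takeD in_set_dropD)

lemma rev_insert_at: "j \<le> length xs \<Longrightarrow> rev (insert_at j M xs) = insert_at (length xs - j) M (rev xs)"
  by (simp add: insert_at_def rev_take rev_drop)

lemma insert_at_inject:
  assumes "M \<notin> set xs" "M \<notin> set ys" "j \<le> length xs" "k \<le> length ys"
    and "insert_at j M xs = insert_at k M ys"
  shows "xs = ys \<and> j = k"
proof -
  have "M \<notin> set (take j xs)" "M \<notin> set (drop j xs)"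
    using assms(1) by (auto dest: in_set_takeD in_set_dropD)
  then have "take j xs = take k ys \<and> drop j xs = drop k ys"
    using assms(5) by (simp add: insert_at_def append_Cons_eq_iff)
  then show ?thesis
    using assms(3,4) by (metis append_take_drop_id length_take min.absorb2)
qed

lemma bij_betw_insert_at:
  assumes "finite A" "M \<notin> A"
  shows "bij_betw (\<lambda>(\<sigma>, j). insert_at j M \<sigma>)
    (permutations_of_set A \<times> {..card A}) (permutations_of_set (insert M A))"
proof (rule bij_betwI')
  fix p q assume "p \<in> permutations_of_set A \<times> {..card A}" "q \<in> permutations_of_set A \<times> {..card A}"
  moreover obtain \<sigma> j \<tau> k where "p = (\<sigma>, j)" "q = (\<tau>, k)" by fastforce
  ultimately have "set \<sigma> = A" "set \<tau> = A" "j \<le> length \<sigma>" "k \<le> length \<tau>"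
    using assms(1) by (auto dest: permutations_of_setD simp: length_finite_permutations_of_set)
  then have "insert_at j M \<sigma> = insert_at k M \<tau> \<Longrightarrow> \<sigma> = \<tau> \<and> j = k"
    using assms(2) insert_at_inject by metis
  then show "((case p of (\<sigma>, j) \<Rightarrow> insert_at j M \<sigma>) = (case q of (\<sigma>, j) \<Rightarrow> insert_at j M \<sigma>))
      = (p = q)"
    using \<open>p = (\<sigma>, j)\<close> \<open>q = (\<tau>, k)\<close> by auto
next
  fix p assume "p \<in> permutations_of_set A \<times> {..card A}"
  with assms show "(case p of (\<sigma>, j) \<Rightarrow> insert_at j M \<sigma>) \<in> permutations_of_set (insert M A)"
    by (auto simp: permutations_of_set_def distinct_insert_at)
next
  fix s assume "s \<in> permutations_of_set (insert M A)"
  then have s: "set s = insert M A" "distinct s" by (auto dest: permutations_of_setD)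
  then obtain ys zs where s_eq: "s = ys @ M # zs" using split_list[of M s] by auto
  have "set (ys @ zs) = A" "distinct (ys @ zs)" using s s_eq assms(2) by auto
  then have "ys @ zs \<in> permutations_of_set A" "card A = length (ys @ zs)"
    using distinct_card[of "ys @ zs"] by (auto simp: permutations_of_set_def simp del: set_append)
  moreover have "s = insert_at (length ys) M (ys @ zs)" by (simp add: s_eq insert_at_def)
  ultimately show "\<exists>p\<in>permutations_of_set A \<times> {..card A}. s = (case p of (\<sigma>, j) \<Rightarrow> insert_at j M \<sigma>)"
    by (intro bexI[of _ "(ys @ zs, length ys)"]) auto
qed

lemma sum_permutations_of_set_insert:
  assumes "finite A" "M \<notin> A"
  shows "(\<Sum>s\<in>permutations_of_set (insert M A). f s)
       = (\<Sum>\<sigma>\<in>permutations_of_set A. \<Sum>j\<le>card A. f (insert_at j M \<sigma>))"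
  by (simp add: sum.reindex_bij_betw[OF bij_betw_insert_at[OF assms], symmetric]
      sum.cartesian_product case_prod_unfold)

lemma sum_permutations_of_set_atLeastAtMost_Suc:
  "(\<Sum>s\<in>permutations_of_set {1..Suc m}. f s)
    = (\<Sum>\<sigma>\<in>permutations_of_set {1..m}. \<Sum>j\<le>m. f (insert_at j (Suc m) \<sigma>))"
proof -
  have "{1..Suc m} = insert (Suc m) {1..m}" by auto
  then show ?thesis by (simp add: sum_permutations_of_set_insert)
qed

section \<open>Inserting a new maximum\<close>

lemma rlmin_insert_at_max:
  "\<forall>z\<in>set xs. z < M \<Longrightarrow> rlmin (insert_at j M xs) = rlmin xs + (if length xs \<le> j then 1 else 0)"
proof (induction xs arbitrary: j)
  case (Cons a xs)
  then show ?case by (cases j) auto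
qed (simp add: insert_at_beyond)

lemma lrmin_insert_at_max:
  assumes "\<forall>z\<in>set xs. z < M" "j \<le> length xs"
  shows "lrmin (insert_at j M xs) = lrmin xs + (if j = 0 then 1 else 0)"
  using assms by (simp add: lrmin_eq_rlmin_rev rev_insert_at rlmin_insert_at_max; arith)

lemma des_Cons_max: "xs \<noteq> [] \<Longrightarrow> \<forall>z\<in>set xs. z < M \<Longrightarrow> des (M # xs) = Suc (des xs)"
  by (cases xs) auto

lemma des_snoc_max: "\<forall>z\<in>set xs. z < M \<Longrightarrow> des (xs @ [M]) = des xs"
  by (induction xs rule: induct_list012) auto

lemma lpk_from_snoc_max: "\<forall>z\<in>set xs. z < M \<Longrightarrow> lpk_from p (xs @ [M]) = lpk_from p xs"
  by (induction xs arbitrary: p rule: induct_list012) auto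

text \<open>An interior slot keeps \<open>des\<close> if it splits a descent and raises it by one otherwise; the
  count is stated additively to avoid truncated subtraction.\<close>

lemma sum_des_insert_at_max_inner:
  fixes g :: "nat \<Rightarrow> 'b::comm_ring_1"
  assumes "\<forall>z\<in>set xs. z < M"
  shows "(\<Sum>j<length xs - 1. g (des (insert_at (Suc j) M xs))) + of_nat (des xs) * g (Suc (des xs))
       = of_nat (des xs) * g (des xs) + of_nat (length xs - 1) * g (Suc (des xs))"
  using assms
proof (induction xs arbitrary: g rule: induct_list012)
  case (3 a b r)
  define e :: nat where "e = (if b < a then 1 else 0)"
  define d where "d = des (b # r)"
  have IH: "(\<Sum>j<length r. g (e + des (insert_at (Suc j) M (b # r)))) + of_nat d * g (e + Suc d)
      = of_nat d * g (e + d) + of_nat (length r) * g (e + Suc d)"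
    using "3.IH"(2)[of "\<lambda>i. g (e + i)"] "3.prems" by (simp add: d_def)
  have "(\<Sum>j<length (a # b # r) - 1. g (des (insert_at (Suc j) M (a # b # r))))
      = g (Suc d) + (\<Sum>j<length r. g (e + des (insert_at (Suc j) M (b # r))))"
    using "3.prems" by (simp add: sum.lessThan_Suc_shift d_def e_def del: sum.lessThan_Suc)
  moreover have "des (a # b # r) = e + d" by (simp add: e_def d_def)
  moreover have "e = 0 \<or> e = 1" by (simp add: e_def)
  ultimately show ?case
    using IH by (auto simp: algebra_simps)
qed simp_all

text \<open>In a slot before the end, a new maximum placed directly before or after a left peak destroys
  that peak while becoming one itself, and in any other such slot it adds a peak. So
  \<open>2 * lpk_from p xs\<close> of these slots keep the value and the rest raise it by one.\<close>

lemma sum_lpk_from_insert_at_max: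
  fixes g :: "nat \<Rightarrow> 'b::comm_ring_1"
  assumes "\<forall>z\<in>set xs. z < M" "p < M"
  shows "(\<Sum>j<length xs. g (lpk_from p (insert_at j M xs))) + of_nat (2 * lpk_from p xs) * g (Suc (lpk_from p xs))
       = of_nat (2 * lpk_from p xs) * g (lpk_from p xs) + of_nat (length xs) * g (Suc (lpk_from p xs))"
  using assms
proof (induction xs arbitrary: p g rule: induct_list012)
  case (3 a b r)
  define e :: nat where "e = (if p < a \<and> b < a then 1 else 0)"
  define k where "k = lpk_from a (b # r)"
  define X where "X j = lpk_from a (insert_at j M (b # r))" for j
  define T where "T = (\<Sum>j<Suc (length r). g (e + X j))"
  have "T + of_nat (2 * k) * g (e + Suc k)
      = of_nat (2 * k) * g (e + k) + of_nat (Suc (length r)) * g (e + Suc k)"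
    using "3.IH"(2)[of a "\<lambda>i. g (e + i)"] "3.prems" by (simp add: T_def k_def X_def)
  then have T: "T = of_nat (2 * k) * g (e + k) + of_nat (Suc (length r)) * g (e + Suc k)
      - of_nat (2 * k) * g (e + Suc k)"
    by (simp add: eq_diff_eq)
  have "(\<Sum>j<length (a # b # r). g (lpk_from p (insert_at j M (a # b # r))))
      = g (Suc k) + (g (X 0) + (\<Sum>j<length r. g (e + X (Suc j))))"
    using "3.prems" by (simp add: sum.lessThan_Suc_shift k_def e_def X_def del: sum.lessThan_Suc)
  also have "\<dots> = g (Suc k) + g (X 0) - g (e + X 0) + T"
    unfolding T_def by (simp only: sum.lessThan_Suc_shift) simp
  finally have S: "(\<Sum>j<length (a # b # r). g (lpk_from p (insert_at j M (a # b # r))))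
      = g (Suc k) + g (X 0) - g (e + X 0) + T" .
  have "X 0 = Suc (lpk_from b r)"
    using "3.prems" by (simp add: X_def lpk_from_Cons_descent)
  moreover have "lpk_from p (a # b # r) = e + k"
    by (simp add: e_def k_def)
  moreover have "e = 0 \<or> e = 1 \<and> k = lpk_from b r"
    by (auto simp: e_def k_def lpk_from_Cons_descent)
  ultimately show ?case
    unfolding S T by (auto simp: algebra_simps)
qed simp_all

definition euler_op :: "'a::idom poly \<Rightarrow> 'a poly" where
  "euler_op p = [:0, 1:] * pderiv p"

lemma euler_op_sum: "euler_op (sum f A) = (\<Sum>x\<in>A. euler_op (f x))"
  using higher_pderiv_sum[of 1 f A] by (simp add: euler_op_def sum_distrib_left)

lemma euler_op_mult: "euler_op (p * q) = euler_op p * q + p * euler_op q"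
  by (simp add: euler_op_def pderiv_mult algebra_simps)

lemma euler_op_const [simp]: "euler_op [:c:] = 0"
  by (simp add: euler_op_def)

lemma euler_op_1 [simp]: "euler_op 1 = 0"
  by (simp add: euler_op_def)

lemma euler_op_linear [simp]: "euler_op [:a, b:] = [:0, b:]"
  by (simp add: euler_op_def pderiv_pCons)

lemma euler_op_power: "euler_op (p ^ n) = smult (of_nat n) (p ^ (n - 1) * euler_op p)"
  by (simp add: euler_op_def pderiv_power mult_ac)

lemma euler_op_power_eigen: "euler_op p = p \<Longrightarrow> euler_op (p ^ n) = smult (of_nat n) (p ^ n)"
  by (induction n) (simp_all add: euler_op_mult smult_add_left)

lemma euler_op_monom [simp]: "euler_op (monom c n) = smult (of_nat n) (monom c n)"
  by (rule poly_eqI) (simp add: euler_op_def coeff_pderiv coeff_pCons split: nat.split)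

definition insertion_op :: "'a::field \<Rightarrow> 'a \<Rightarrow> nat \<Rightarrow> 'a poly \<Rightarrow> 'a poly" where
  "insertion_op y \<beta> n p = [:\<beta> * y / 2, \<beta> / 2 + of_nat n:] * p + [:y, -1:] * euler_op p"

lemma insertion_op_sum: "insertion_op y \<beta> n (sum f A) = (\<Sum>x\<in>A. insertion_op y \<beta> n (f x))"
  by (simp add: insertion_op_def euler_op_sum sum_distrib_left sum.distrib)

lemma insertion_op_monom:
  fixes y \<beta> c :: "'a::field_char_0"
  shows "insertion_op y \<beta> (d + e) (monom (y ^ e * c) d)
    = monom (y ^ e * c * \<beta> / 2) (Suc d) + monom (y ^ Suc e * c * \<beta> / 2) d
      + of_nat d * monom (y ^ Suc e * c) d + of_nat e * monom (y ^ e * c) (Suc d)"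
  unfolding insertion_op_def euler_op_monom
  by (rule poly_eq_poly_eq_iff[THEN iffD1], rule ext) (simp add: poly_monom field_simps)

lemma insertion_op_peak_monomial:
  fixes y \<beta> c :: "'a::field_char_0"
  defines "S \<equiv> [:0, y:]" and "U \<equiv> [:y / 2, 1 / 2:]"
  shows "insertion_op y \<beta> (2 * k + e) (S ^ k * U ^ e * [:c:])
    = of_nat (2 * k) * (S ^ k * U ^ Suc e * [:c:]) + of_nat e * (S ^ Suc k * U ^ (e - 1) * [:c:])
      + S ^ k * U ^ Suc e * [:\<beta> * c:]"
proof -
  have Sk: "euler_op (S ^ k) = smult (of_nat k) (S ^ k)"
    by (rule euler_op_power_eigen) (simp add: S_def)
  have Ue: "euler_op (U ^ e) = smult (of_nat e) (U ^ (e - 1) * [:0, 1 / 2:])"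
    by (simp add: U_def euler_op_power)
  show ?thesis
    unfolding insertion_op_def euler_op_mult Sk Ue euler_op_const
    by (cases e) (simp_all add: S_def U_def poly_eq_poly_eq_iff[symmetric] fun_eq_iff field_simps)
qed

section \<open>Both generating polynomials satisfy the same recursion\<close>

definition peak_weight :: "'a::field \<Rightarrow> 'a \<Rightarrow> nat \<Rightarrow> nat list \<Rightarrow> 'a poly" where
  "peak_weight y \<beta> n s = [:0, y:] ^ lpk s * [:y / 2, 1 / 2:] ^ (n - 2 * lpk s) * [:\<beta> ^ rlmin s:]"

lemma sum_peak_weight_insert_at_max:
  fixes y \<beta> :: "'a::field_char_0"
  assumes M: "\<forall>z\<in>set \<sigma>. z < M" "0 < M" and n: "length \<sigma> = n"
  shows "(\<Sum>j\<le>n. peak_weight y \<beta> (Suc n) (insert_at j M \<sigma>)) = insertion_op y \<beta> n (peak_weight y \<beta> n \<sigma>)"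
proof -
  define k where "k = lpk \<sigma>"
  define e where "e = n - 2 * k"
  define C where "C = [:\<beta> ^ rlmin \<sigma>:]"
  define G where "G k' = [:0, y:] ^ k' * [:y / 2, 1 / 2:] ^ (Suc n - 2 * k') * C" for k'
  have n_eq: "n = 2 * k + e"
    using lpk_from_le_length[of 0 \<sigma>] n by (simp add: e_def k_def lpk_eq_lpk_from_0)
  have "(\<Sum>j<n. peak_weight y \<beta> (Suc n) (insert_at j M \<sigma>)) = (\<Sum>j<n. G (lpk_from 0 (insert_at j M \<sigma>)))"
    using M n by (intro sum.cong) (simp_all add: peak_weight_def G_def C_def rlmin_insert_at_max lpk_eq_lpk_from_0)
  also have "\<dots> = of_nat (2 * k) * G k + of_nat e * G (Suc k)"
    using sum_lpk_from_insert_at_max[of \<sigma> M 0 G] M n n_eq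
    by (simp add: k_def lpk_eq_lpk_from_0 algebra_simps)
  finally have inner: "(\<Sum>j<n. peak_weight y \<beta> (Suc n) (insert_at j M \<sigma>))
      = of_nat (2 * k) * G k + of_nat e * G (Suc k)" .
  have last: "peak_weight y \<beta> (Suc n) (insert_at n M \<sigma>)
      = [:0, y:] ^ k * [:y / 2, 1 / 2:] ^ Suc e * [:\<beta> * \<beta> ^ rlmin \<sigma>:]"
    using M n n_eq rlmin_insert_at_max[of \<sigma> M n]
    by (simp add: peak_weight_def insert_at_beyond lpk_eq_lpk_from_0 lpk_from_snoc_max k_def)
  have "peak_weight y \<beta> n \<sigma> = [:0, y:] ^ k * [:y / 2, 1 / 2:] ^ e * C"
    by (simp add: peak_weight_def k_def e_def C_def)
  moreover have "(\<Sum>j\<le>n. peak_weight y \<beta> (Suc n) (insert_at j M \<sigma>))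
      = (\<Sum>j<n. peak_weight y \<beta> (Suc n) (insert_at j M \<sigma>)) + peak_weight y \<beta> (Suc n) (insert_at n M \<sigma>)"
    by (simp flip: lessThan_Suc_atMost)
  ultimately show ?thesis
    unfolding inner last C_def using insertion_op_peak_monomial[of y \<beta> k e "\<beta> ^ rlmin \<sigma>"]
    by (simp add: G_def C_def n_eq)
qed

definition descent_weight :: "'a::field \<Rightarrow> 'a \<Rightarrow> nat \<Rightarrow> nat list \<Rightarrow> 'a poly" where
  "descent_weight y \<beta> n s = monom (y ^ (n - des s) * (\<beta> / 2) ^ (lrmin s + rlmin s - 2)) (des s)"

lemma sum_descent_weight_insert_at_max:
  fixes y \<beta> :: "'a::field_char_0"
  assumes M: "\<forall>z\<in>set \<tau>. z < M" and n: "length \<tau> = Suc n"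
  shows "(\<Sum>j\<le>Suc n. descent_weight y \<beta> (Suc n) (insert_at j M \<tau>))
    = insertion_op y \<beta> n (descent_weight y \<beta> n \<tau>)"
proof -
  define d where "d = des \<tau>"
  define e where "e = n - d"
  define c where "c = (\<beta> / 2) ^ (lrmin \<tau> + rlmin \<tau> - 2)"
  define g where "g d' = monom (y ^ (Suc n - d') * c) d'" for d'
  have "\<tau> \<noteq> []" using n by auto
  then have n_eq: "n = d + e" and "lrmin \<tau> + rlmin \<tau> - 1 = Suc (lrmin \<tau> + rlmin \<tau> - 2)"
    using des_less_length[of \<tau>] lrmin_pos[of \<tau>] rlmin_pos[of \<tau>] n
    by (simp_all add: d_def e_def)
  then have c_Suc: "(\<beta> / 2) ^ (lrmin \<tau> + rlmin \<tau> - 1) = c * \<beta> / 2"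
    by (simp add: c_def)
  have first: "descent_weight y \<beta> (Suc n) (insert_at 0 M \<tau>) = monom (y ^ e * c * \<beta> / 2) (Suc d)"
    using M \<open>\<tau> \<noteq> []\<close> rlmin_insert_at_max[of \<tau> M 0] lrmin_insert_at_max[of \<tau> M 0] n n_eq c_Suc
    by (simp add: descent_weight_def des_Cons_max d_def)
  have last: "descent_weight y \<beta> (Suc n) (insert_at (Suc n) M \<tau>) = monom (y ^ Suc e * c * \<beta> / 2) d"
    using M rlmin_insert_at_max[of \<tau> M "Suc n"] lrmin_insert_at_max[of \<tau> M "Suc n"] n n_eq c_Suc
    by (simp add: descent_weight_def insert_at_beyond des_snoc_max d_def)
  have "(\<Sum>j<n. descent_weight y \<beta> (Suc n) (insert_at (Suc j) M \<tau>))
      = (\<Sum>j<length \<tau> - 1. g (des (insert_at (Suc j) M \<tau>)))"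
    using M n by (intro sum.cong) (simp_all add: descent_weight_def g_def c_def rlmin_insert_at_max lrmin_insert_at_max)
  also have "\<dots> = of_nat d * g d + of_nat e * g (Suc d)"
    using sum_des_insert_at_max_inner[of \<tau> M g] M n n_eq by (simp add: d_def algebra_simps)
  finally have inner: "(\<Sum>j<n. descent_weight y \<beta> (Suc n) (insert_at (Suc j) M \<tau>))
      = of_nat d * g d + of_nat e * g (Suc d)" .
  have "(\<Sum>j\<le>Suc n. descent_weight y \<beta> (Suc n) (insert_at j M \<tau>))
      = descent_weight y \<beta> (Suc n) (insert_at 0 M \<tau>)
        + (\<Sum>j<n. descent_weight y \<beta> (Suc n) (insert_at (Suc j) M \<tau>))
        + descent_weight y \<beta> (Suc n) (insert_at (Suc n) M \<tau>)"
    unfolding sum.atMost_Suc_shift by (simp add: add.assoc flip: lessThan_Suc_atMost)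
  also have "\<dots> = insertion_op y \<beta> n (descent_weight y \<beta> n \<tau>)"
    using insertion_op_monom[of y \<beta> d e c]
    unfolding first inner last by (simp add: descent_weight_def g_def n_eq d_def c_def)
  finally show ?thesis .
qed

definition peak_poly :: "'a::field \<Rightarrow> 'a \<Rightarrow> nat \<Rightarrow> 'a poly" where
  "peak_poly y \<beta> n = (\<Sum>s\<in>permutations_of_set {1..n}. peak_weight y \<beta> n s)"

definition descent_poly :: "'a::field \<Rightarrow> 'a \<Rightarrow> nat \<Rightarrow> 'a poly" where
  "descent_poly y \<beta> n = (\<Sum>s\<in>permutations_of_set {1..n+1}. descent_weight y \<beta> n s)"

lemma peak_poly_Suc:
  "peak_poly y \<beta> (Suc n) = insertion_op y \<beta> n (peak_poly y \<beta> n :: 'a::field_char_0 poly)"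
  unfolding peak_poly_def sum_permutations_of_set_atLeastAtMost_Suc insertion_op_sum
  by (rule sum.cong[OF refl], rule sum_peak_weight_insert_at_max)
    (auto dest: permutations_of_setD simp: length_finite_permutations_of_set)

lemma descent_poly_Suc:
  "descent_poly y \<beta> (Suc n) = insertion_op y \<beta> n (descent_poly y \<beta> n :: 'a::field_char_0 poly)"
  unfolding descent_poly_def Suc_eq_plus1[symmetric] sum_permutations_of_set_atLeastAtMost_Suc[of _ "Suc n"]
    insertion_op_sum
  by (rule sum.cong[OF refl], rule sum_descent_weight_insert_at_max)
    (auto dest: permutations_of_setD simp: length_finite_permutations_of_set)

lemma peak_poly_eq_descent_poly: "peak_poly y \<beta> n = (descent_poly y \<beta> n :: 'a::field_char_0 poly)"
proof (induction n)
  case 0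
  have "lrmin [1] = 1" by (simp add: lrmin_eq_rlmin_rev)
  then show ?case by (simp add: peak_poly_def descent_poly_def peak_weight_def descent_weight_def lpk_eq_lpk_from_0)
next
  case (Suc n)
  then show ?case by (simp add: peak_poly_Suc descent_poly_Suc)
qed

theorem theorem1p10:
  fixes x y \<beta> :: "'a :: field_char_0" and n :: nat
  shows "(\<Sum>s\<in>permutations_of_set {1..n}.
            (x * y) ^ lpk s * ((x + y) / 2) ^ (n - 2 * lpk s) * \<beta> ^ rlmin s)
       = (\<Sum>s\<in>permutations_of_set {1..n+1}.
            x ^ des s * y ^ (n - des s) * (\<beta> / 2) ^ (lrmin s + rlmin s - 2))"
proof -
  have "poly (peak_weight y \<beta> n s) x = (x * y) ^ lpk s * ((x + y) / 2) ^ (n - 2 * lpk s) * \<beta> ^ rlmin s"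
    for s by (simp add: peak_weight_def mult.commute add.commute flip: add_divide_distrib)
  moreover have "poly (descent_weight y \<beta> n s) x = x ^ des s * y ^ (n - des s) * (\<beta> / 2) ^ (lrmin s + rlmin s - 2)"
    for s by (simp add: descent_weight_def poly_monom mult_ac)
  ultimately show ?thesis
    using arg_cong[OF peak_poly_eq_descent_poly[of y \<beta> n], of "\<lambda>p. poly p x"]
    by (simp add: peak_poly_def descent_poly_def poly_sum)
qed

end
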